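(* In the model described in the context, if all high-level operations are totally ordered, then Algorithm 1 with threshold $t\ge f+1$ satisfies strong accuracy.
   Context: Model. An asynchronous system has client processes (writers, readers, auditors) and $n$ storage objects $o_1,\dots,o_n$. Each $o_k$ is a linearisable loggable read/write register with a log $L_k$ (initially empty). Its rw-write($b$) stores a block; rw-read() returns the current block and appends $\langle p_r,\mathit{label}(b)\rangle$ to $L_k$, where $p_r$ is the reader and $\mathit{label}(b)$ identifies the value from which $b$ was derived; rw-getLog() returns $L_k$. A register over values $\mathbb{V}$ is emulated by information dispersal. An a-write($v$) encodes $v$ into $b_{v_1},\dots,b_{v_n}$ with $b_{v_k}$ sent to $o_k$. Any $\tau$ distinct blocks of $v$ recover $v$, and fewer do not. Total order: all high-level operations (a-write, a-read) are serialised via total order broadcast and executed sequentially, so the storage objects hold blocks of a single value at any time. Faults. At most $f$ objects are faulty; a faulty object may crash, omit its block, omit log records from auditors, and report records of nonexistent reads. Providing set $P_{p_r,v}$: the set of objects that received a write of $b_{v_k}$ and responded $b_{v_k}$ to a read of $p_r$. The value $v$ is effectively read by $p_r$ iff $|P_{p_r,v}|\ge\tau$. Algorithm 1 (a-audit with threshold $t$): 1. Invoke rw-getLog on all $n$ objects in parallel, and wait for responses from at least $n-f$; let $L[k]$ be the log received from $o_k$. 2. For every record $\langle p_r,\mathit{label}(v)\rangle$ in some $L[k]$, let $\mathcal{E}_{p_r,v}=\{k:\langle p_r,\mathit{label}(v)\rangle\in L[k]\}$, and add it to $E_A$ iff $|\mathcal{E}_{p_r,v}|\ge t$. 3. Return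 $E_A$. Strong accuracy: for every correct reader $p_r$ and every value $v$, $|P_{p_r,v}|<\tau$ before the audit implies $\mathcal{E}_{p_r,v}\notin E_A$. *)

theory Defs
  imports Main
begin

text \<open>High-level operations, serialised by total order broadcast and executed
sequentially.  An execution is the list of high-level operations in that order.\<close>

datatype ('p, 'v) hop = AWrite 'v | ARead 'p

text \<open>Value stored (as blocks, on all objects) after executing a sequence of
operations, starting from the initial value v0.  Under total order the objects
hold blocks of a single value at any time.\<close>

fun stored_value :: "'v \<Rightarrow> ('p, 'v) hop list \<Rightarrow> 'v" where
  "stored_value v0 [] = v0"
| "stored_value v0 (AWrite v # ops) = stored_value v ops"
| "stored_value v0 (ARead p # ops) = stored_value v0 ops"

definition cur_value :: "'v \<Rightarrow> ('p, 'v) hop list \<Rightarrow> nat \<Rightarrow> 'v" where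
  "cur_value v0 ops i = stored_value v0 (take i ops)"

text \<open>A run: objects are 0..n-1; faulty is the set of faulty objects;
correct_readers the set of correct readers; prov i is the set of objects
that executed the rw-read of the a-read number i and responded with their block
(correct objects always respond with their block once they execute the rw-read;
faulty ones may omit it).\<close>

definition valid_run ::
  "nat \<Rightarrow> nat \<Rightarrow> nat \<Rightarrow> nat set \<Rightarrow> 'p set \<Rightarrow> ('p, 'v) hop list \<Rightarrow> (nat \<Rightarrow> nat set) \<Rightarrow> bool" where
  "valid_run n f tau faulty correct_readers ops prov \<longleftrightarrow>
     faulty \<subseteq> {..<n} \<and> card faulty \<le> f \<and>
     (\<forall>i < length ops. prov i \<subseteq> {..<n}) \<and>
     (\<forall>i < length ops. \<forall>p. ops ! i = ARead p \<and> p \<in> correct_readers \<longrightarrow> tau \<le> card (prov i))"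

text \<open>Log L_k of object k (its actual content): a record (p, label v) is appended
by each rw-read of reader p that object k executed, v being the value whose block
it holds (and returns).\<close>

definition obj_log :: "'v \<Rightarrow> ('p, 'v) hop list \<Rightarrow> (nat \<Rightarrow> nat set) \<Rightarrow> nat \<Rightarrow> ('p \<times> 'v) set" where
  "obj_log v0 ops prov k =
     {(p, cur_value v0 ops i) | p i. i < length ops \<and> ops ! i = ARead p \<and> k \<in> prov i}"

definition providing_set :: "'v \<Rightarrow> ('p, 'v) hop list \<Rightarrow> (nat \<Rightarrow> nat set) \<Rightarrow> 'p \<Rightarrow> 'v \<Rightarrow> nat set" where
  "providing_set v0 ops prov p v =
     {k. \<exists>i < length ops. ops ! i = ARead p \<and> cur_value v0 ops i = v \<and> k \<in> prov i}"

text \<open>Audit responses: resp is the set of objects whose rw-getLog response was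
received (at least n - f); L k is the log reported by o_k.  Correct objects report
their actual log; faulty objects may report anything.\<close>

definition valid_audit_responses ::
  "nat \<Rightarrow> nat \<Rightarrow> nat set \<Rightarrow> 'v \<Rightarrow> ('p, 'v) hop list \<Rightarrow> (nat \<Rightarrow> nat set) \<Rightarrow> nat set \<Rightarrow> (nat \<Rightarrow> ('p \<times> 'v) set) \<Rightarrow> bool" where
  "valid_audit_responses n f faulty v0 ops prov resp L \<longleftrightarrow>
     resp \<subseteq> {..<n} \<and> n - f \<le> card resp \<and>
     (\<forall>k \<in> resp. k \<notin> faulty \<longrightarrow> L k = obj_log v0 ops prov k)"

definition audit_evidence :: "nat set \<Rightarrow> (nat \<Rightarrow> ('p \<times> 'v) set) \<Rightarrow> 'p \<Rightarrow> 'v \<Rightarrow> nat set" where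
  "audit_evidence resp L p v = {k \<in> resp. (p, v) \<in> L k}"

definition audit_output :: "nat \<Rightarrow> nat set \<Rightarrow> (nat \<Rightarrow> ('p \<times> 'v) set) \<Rightarrow> ('p \<times> 'v) set" where
  "audit_output t resp L =
     {(p, v) | p v. (\<exists>k \<in> resp. (p, v) \<in> L k) \<and> t \<le> card (audit_evidence resp L p v)}"

end

theory Submission
  imports Defs
begin

text \<open>A record accepted by the audit is reported by at least t \<ge> f + 1 objects, so at
least one of them is correct and its log is genuine.  A correct object logs a record
of a reader only for an actual rw-read of that reader, and under total order that
rw-read belongs to an a-read executed while the logged value was stored.  If the reader
is correct, that a-read completed with at least \<tau> blocks of the value, and all the
objects that provided them lie in the providing set, so the value was effectively read.\<close>

lemma exists_outside_if_card_gt: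
  assumes "finite B" "card B \<le> f" "f + 1 \<le> card A"
  shows "\<exists>k \<in> A. k \<notin> B"
proof (rule ccontr)
  assume "\<not> (\<exists>k \<in> A. k \<notin> B)"
  then have "A \<subseteq> B" by blast
  with \<open>finite B\<close> have "card A \<le> card B" by (rule card_mono)
  with assms(2,3) show False by linarith
qed

lemma prov_subset_providing_set:
  assumes "i < length ops" "ops ! i = ARead p"
  shows "prov i \<subseteq> providing_set v0 ops prov p (cur_value v0 ops i)"
  using assms by (auto simp: providing_set_def)

lemma obj_log_imp_read:
  assumes "(p, v) \<in> obj_log v0 ops prov k"
  obtains i where "i < length ops" "ops ! i = ARead p" "v = cur_value v0 ops i"
  using assms by (auto simp: obj_log_def)

lemma valid_run_providing_set_finite:
  assumes "valid_run n f tau faulty correct_readers ops prov"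
  shows "finite (providing_set v0 ops prov p v)"
proof (rule finite_subset)
  show "providing_set v0 ops prov p v \<subseteq> {..<n}"
    using assms by (auto simp: providing_set_def valid_run_def)
qed simp

lemma valid_run_logged_value_effectively_read:
  assumes run: "valid_run n f tau faulty correct_readers ops prov"
    and "p \<in> correct_readers" and "(p, v) \<in> obj_log v0 ops prov k"
  shows "tau \<le> card (providing_set v0 ops prov p v)"
proof -
  obtain i where i: "i < length ops" "ops ! i = ARead p" "v = cur_value v0 ops i"
    using obj_log_imp_read[OF assms(3)] .
  have "tau \<le> card (prov i)"
    using run i \<open>p \<in> correct_readers\<close> by (auto simp: valid_run_def)
  also have "\<dots> \<le> card (providing_set v0 ops prov p v)"
    using prov_subset_providing_set[OF i(1,2)] i(3) valid_run_providing_set_finite[OF run]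
    by (simp add: card_mono)
  finally show ?thesis .
qed

lemma audit_output_has_correct_witness:
  assumes "(p, v) \<in> audit_output t resp L" "t \<ge> f + 1"
    and "finite faulty" "card faulty \<le> f"
  obtains k where "k \<in> resp" "k \<notin> faulty" "(p, v) \<in> L k"
proof -
  have "f + 1 \<le> card (audit_evidence resp L p v)"
    using assms(1,2) by (auto simp: audit_output_def)
  then obtain k where "k \<in> audit_evidence resp L p v" "k \<notin> faulty"
    using exists_outside_if_card_gt[OF assms(3,4)] by blast
  then show thesis using that by (auto simp: audit_evidence_def)
qed

theorem lemma9:
  fixes n f tau t :: nat and faulty :: "nat set" and correct_readers :: "'p set"
    and v0 :: 'v and ops :: "('p, 'v) hop list" and prov :: "nat \<Rightarrow> nat set"
    and resp :: "nat set" and L :: "nat \<Rightarrow> ('p \<times> 'v) set"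
  assumes run: "valid_run n f tau faulty correct_readers ops prov"
    and aud: "valid_audit_responses n f faulty v0 ops prov resp L"
    and thr: "t \<ge> f + 1"
  shows "\<forall>p \<in> correct_readers. \<forall>v.
           card (providing_set v0 ops prov p v) < tau \<longrightarrow> (p, v) \<notin> audit_output t resp L"
proof (intro ballI allI impI notI)
  fix p v
  assume p: "p \<in> correct_readers"
    and not_read: "card (providing_set v0 ops prov p v) < tau"
    and audited: "(p, v) \<in> audit_output t resp L"
  have "finite faulty" "card faulty \<le> f"
    using run by (auto simp: valid_run_def intro: finite_subset)
  then obtain k where "k \<in> resp" "k \<notin> faulty" "(p, v) \<in> L k"
    using audit_output_has_correct_witness[OF audited thr] by blast
  then have "(p, v) \<in> obj_log v0 ops prov k"
    using aud by (auto simp: valid_audit_responses_def)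
  then have "tau \<le> card (providing_set v0 ops prov p v)"
    using valid_run_logged_value_effectively_read[OF run p] by blast
  with not_read show False by simp
qed

end
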